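(* Let $\mu,\nu\in\Sigma$ be restricted roots such that $\mu+\nu\in\Sigma$. Then the bilinear pairing $\mathfrak g_\mu\times\mathfrak g_\nu\to\mathfrak g_{\mu+\nu}$, $(X,Y)\mapsto[X,Y]$, is nondegenerate: for every nonzero $X\in\mathfrak g_\mu$ there is $Y\in\mathfrak g_\nu$ with $[X,Y]\ne0$, and for every nonzero $Y\in\mathfrak g_\nu$ there is $X\in\mathfrak g_\mu$ with $[X,Y]\neq0$.
   Context: $\mathfrak g$ is the Lie algebra of the isometry group of a Riemannian symmetric space of noncompact type, $\mathfrak g=\mathfrak k\oplus\mathfrak p$ a Cartan decomposition, $\mathfrak a\subseteq\mathfrak p$ maximal abelian, $\Sigma\subset\mathfrak a^*$ the restricted root system and $\mathfrak g_\mu=\{X\in\mathfrak g:[H,X]=\mu(H)X\ \forall H\in\mathfrak a\}$ the restricted root spaces. *)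

theory Defs
  imports "HOL-Analysis.Analysis"
begin

text \<open>A finite-dimensional real Lie algebra is modelled as a Euclidean-space type 'g
(the inner product is only used to compute traces via an orthonormal basis;
trace is basis independent) together with a bracket operation br.\<close>

definition lie_algebra :: "('g::euclidean_space \<Rightarrow> 'g \<Rightarrow> 'g) \<Rightarrow> bool" where
  "lie_algebra br \<longleftrightarrow> bilinear br \<and> (\<forall>x. br x x = 0) \<and>
     (\<forall>x y z. br x (br y z) + br y (br z x) + br z (br x y) = 0)"

definition killing :: "('g::euclidean_space \<Rightarrow> 'g \<Rightarrow> 'g) \<Rightarrow> 'g \<Rightarrow> 'g \<Rightarrow> real" where
  "killing br X Y = (\<Sum>b\<in>Basis. br X (br Y b) \<bullet> b)"

definition semisimple :: "('g::euclidean_space \<Rightarrow> 'g \<Rightarrow> 'g) \<Rightarrow> bool" where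
  "semisimple br \<longleftrightarrow> lie_algebra br \<and> (\<forall>X. (\<forall>Y. killing br X Y = 0) \<longrightarrow> X = 0)"

definition lie_ideal :: "('g::euclidean_space \<Rightarrow> 'g \<Rightarrow> 'g) \<Rightarrow> 'g set \<Rightarrow> bool" where
  "lie_ideal br I \<longleftrightarrow> subspace I \<and> (\<forall>X Y. Y \<in> I \<longrightarrow> br X Y \<in> I)"

definition cartan_decomposition ::
  "('g::euclidean_space \<Rightarrow> 'g \<Rightarrow> 'g) \<Rightarrow> 'g set \<Rightarrow> 'g set \<Rightarrow> bool" where
  "cartan_decomposition br K P \<longleftrightarrow>
     subspace K \<and> subspace P \<and> K \<inter> P = {0} \<and> (\<forall>X. \<exists>k\<in>K. \<exists>p\<in>P. X = k + p) \<and>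
     (\<forall>X\<in>K. \<forall>Y\<in>K. br X Y \<in> K) \<and> (\<forall>X\<in>K. \<forall>Y\<in>P. br X Y \<in> P) \<and>
     (\<forall>X\<in>P. \<forall>Y\<in>P. br X Y \<in> K) \<and>
     (\<forall>X\<in>K. X \<noteq> 0 \<longrightarrow> killing br X X < 0) \<and>
     (\<forall>X\<in>P. X \<noteq> 0 \<longrightarrow> killing br X X > 0)"

text \<open>Lie algebra of the isometry group of a Riemannian symmetric space of noncompact type:
a semisimple Lie algebra with Cartan decomposition g = k + p where k contains no nonzero
ideal of g (effectivity; equivalently, no compact ideals).\<close>
definition noncompact_type ::
  "('g::euclidean_space \<Rightarrow> 'g \<Rightarrow> 'g) \<Rightarrow> 'g set \<Rightarrow> 'g set \<Rightarrow> bool" where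
  "noncompact_type br K P \<longleftrightarrow> semisimple br \<and> cartan_decomposition br K P \<and>
     (\<forall>I. lie_ideal br I \<and> I \<subseteq> K \<longrightarrow> I = {0})"

definition maximal_abelian ::
  "('g::euclidean_space \<Rightarrow> 'g \<Rightarrow> 'g) \<Rightarrow> 'g set \<Rightarrow> 'g set \<Rightarrow> bool" where
  "maximal_abelian br P A \<longleftrightarrow> subspace A \<and> A \<subseteq> P \<and>
     (\<forall>H\<in>A. \<forall>H'\<in>A. br H H' = 0) \<and>
     (\<forall>X\<in>P. (\<forall>H\<in>A. br H X = 0) \<longrightarrow> X \<in> A)"

text \<open>Restricted root space g_mu for a functional mu (only its values on a matter).\<close>
definition root_space ::
  "('g::euclidean_space \<Rightarrow> 'g \<Rightarrow> 'g) \<Rightarrow> 'g set \<Rightarrow> ('g \<Rightarrow> real) \<Rightarrow> 'g set" where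
  "root_space br A \<mu> = {X. \<forall>H\<in>A. br H X = \<mu> H *\<^sub>R X}"

definition restricted_root ::
  "('g::euclidean_space \<Rightarrow> 'g \<Rightarrow> 'g) \<Rightarrow> 'g set \<Rightarrow> ('g \<Rightarrow> real) \<Rightarrow> bool" where
  "restricted_root br A \<mu> \<longleftrightarrow> linear \<mu> \<and> (\<exists>H\<in>A. \<mu> H \<noteq> 0) \<and>
     (\<exists>X\<in>root_space br A \<mu>. X \<noteq> 0)"

end

theory Submission
  imports Defs
begin

text \<open>Let \<theta> be the Cartan involution and B_\<theta>(X,Y) = -B(X,\<theta>Y) the associated inner
  product. Suppose 0 \<noteq> X \<in> g_\<mu> but [X, g_\<nu>] = 0. Then H = [X,\<theta>X] lies in a and
  \<mu>(H) B_\<theta>(X,X) = -B_\<theta>(H,H), where H \<noteq> 0 because B(H,H') = -\<mu>(H') B_\<theta>(X,X);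
  so \<mu>(H) < 0. For 0 \<noteq> Y \<in> g_\<nu> we get \<nu>(H) B_\<theta>(Y,Y) = -B_\<theta>([\<theta>X,Y],[\<theta>X,Y]) \<le> 0.
  Finally ad \<theta>X maps g_(\<mu>+\<nu>) into g_\<nu>, on which ad X vanishes, so by adjointness
  [\<theta>X, g_(\<mu>+\<nu>)] = 0; then (\<mu>+\<nu>)(H) B_\<theta>(Z,Z) = B_\<theta>([X,Z],[X,Z]) \<ge> 0 for
  0 \<noteq> Z \<in> g_(\<mu>+\<nu>), contradicting \<mu>(H) < 0 and \<nu>(H) \<le> 0.
  The other half follows by symmetry.\<close>

definition op_trace :: "('a::euclidean_space \<Rightarrow> 'a) \<Rightarrow> real" where
  "op_trace f = (\<Sum>b\<in>Basis. f b \<bullet> b)"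

lemma op_trace_compose_expand:
  fixes f g :: "'a::euclidean_space \<Rightarrow> 'a"
  assumes "linear f"
  shows "op_trace (f \<circ> g) = (\<Sum>b\<in>Basis. \<Sum>c\<in>Basis. (g b \<bullet> c) * (f c \<bullet> b))"
proof -
  have "f (g b) = (\<Sum>c\<in>Basis. (g b \<bullet> c) *\<^sub>R f c)" for b
    using linear_sum[OF assms] linear_scale[OF assms]
    by (metis (no_types, lifting) euclidean_representation sum.cong)
  then show ?thesis
    by (simp add: op_trace_def inner_sum_left)
qed

lemma op_trace_compose_commute:
  fixes f g :: "'a::euclidean_space \<Rightarrow> 'a"
  assumes "linear f" "linear g"
  shows "op_trace (f \<circ> g) = op_trace (g \<circ> f)"
  unfolding op_trace_compose_expand[OF assms(1)] op_trace_compose_expand[OF assms(2)]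
  by (subst sum.swap) (simp add: mult.commute)

lemma op_trace_diff: "op_trace (\<lambda>x. f x - g x) = op_trace f - op_trace g"
  by (simp add: op_trace_def inner_diff_left sum_subtractf)

locale real_lie_algebra =
  fixes br :: "'g::euclidean_space \<Rightarrow> 'g \<Rightarrow> 'g"
  assumes lie_algebra: "lie_algebra br"
begin

lemma bilinear_br: "bilinear br"
  using lie_algebra by (simp add: lie_algebra_def)

lemma linear_br: "linear (br X)"
  using bilinear_br by (simp add: bilinear_def)

lemmas br_bilinear_simps [simp] =
  bilinear_ladd[OF bilinear_br] bilinear_radd[OF bilinear_br]
  bilinear_lmul[OF bilinear_br] bilinear_rmul[OF bilinear_br]
  bilinear_lneg[OF bilinear_br] bilinear_rneg[OF bilinear_br]
  bilinear_lzero[OF bilinear_br] bilinear_rzero[OF bilinear_br]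
  bilinear_lsub[OF bilinear_br] bilinear_rsub[OF bilinear_br]

lemma br_self: "br X X = 0"
  using lie_algebra by (simp add: lie_algebra_def)

lemma br_jacobi: "br X (br Y Z) + br Y (br Z X) + br Z (br X Y) = 0"
  using lie_algebra by (simp add: lie_algebra_def)

lemma br_antisym: "br X Y = - br Y X"
proof -
  have "br X Y + br Y X = br (X + Y) (X + Y) - br X X - br Y Y" by simp
  also have "\<dots> = 0" by (simp only: br_self diff_zero)
  finally show ?thesis by (simp add: eq_neg_iff_add_eq_0)
qed

lemma br_br_left: "br (br X Y) Z = br X (br Y Z) - br Y (br X Z)"
proof -
  have "br (br X Y) Z = - br Z (br X Y)" by (rule br_antisym)
  also have "br Z (br X Y) = - (br X (br Y Z) + br Y (br Z X))"
    using br_jacobi[of Z X Y] by (simp add: add.assoc add_eq_0_iff2)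
  also have "br Z X = - br X Z" by (rule br_antisym)
  finally show ?thesis by simp
qed

lemma br_derivation: "br X (br Y Z) = br (br X Y) Z + br Y (br X Z)"
  by (simp add: br_br_left)

lemma killing_eq_op_trace: "killing br X Y = op_trace (br X \<circ> br Y)"
  by (simp add: killing_def op_trace_def)

lemma bilinear_killing: "bilinear (killing br)"
  unfolding bilinear_def killing_def
  by (auto intro!: linearI simp: inner_add_left sum.distrib sum_distrib_left)

lemmas killing_bilinear_simps [simp] =
  bilinear_ladd[OF bilinear_killing] bilinear_radd[OF bilinear_killing]
  bilinear_lmul[OF bilinear_killing] bilinear_rmul[OF bilinear_killing]
  bilinear_lneg[OF bilinear_killing] bilinear_rneg[OF bilinear_killing]
  bilinear_lzero[OF bilinear_killing] bilinear_rzero[OF bilinear_killing]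
  bilinear_lsub[OF bilinear_killing] bilinear_rsub[OF bilinear_killing]

lemma killing_sym: "killing br X Y = killing br Y X"
  unfolding killing_eq_op_trace by (rule op_trace_compose_commute[OF linear_br linear_br])

lemma killing_invariant: "killing br (br X Y) Z = killing br X (br Y Z)"
proof -
  have "op_trace (br Y \<circ> (br X \<circ> br Z)) = op_trace ((br X \<circ> br Z) \<circ> br Y)"
    by (rule op_trace_compose_commute[OF linear_br linear_compose[OF linear_br linear_br]])
  then show ?thesis
    unfolding killing_eq_op_trace
    by (simp add: o_def br_br_left op_trace_diff)
qed

lemma root_space_br:
  assumes "X \<in> root_space br A \<mu>" "Y \<in> root_space br A \<nu>"
  shows "br X Y \<in> root_space br A (\<lambda>H. \<mu> H + \<nu> H)"
  using assms by (simp add: root_space_def br_derivation scaleR_add_left)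

end

locale cartan_decomposed = real_lie_algebra br for br :: "'g::euclidean_space \<Rightarrow> 'g \<Rightarrow> 'g" +
  fixes K P :: "'g set"
  assumes cartan: "cartan_decomposition br K P"
begin

lemma subspace_K: "subspace K" and subspace_P: "subspace P"
  and K_inter_P: "K \<inter> P = {0}" and K_plus_P: "\<exists>k\<in>K. \<exists>p\<in>P. X = k + p"
  and br_K_K: "k \<in> K \<Longrightarrow> k' \<in> K \<Longrightarrow> br k k' \<in> K"
  and br_K_P: "k \<in> K \<Longrightarrow> p \<in> P \<Longrightarrow> br k p \<in> P"
  and br_P_P: "p \<in> P \<Longrightarrow> p' \<in> P \<Longrightarrow> br p p' \<in> K"
  and killing_K_neg: "k \<in> K \<Longrightarrow> k \<noteq> 0 \<Longrightarrow> killing br k k < 0"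
  and killing_P_pos: "p \<in> P \<Longrightarrow> p \<noteq> 0 \<Longrightarrow> killing br p p > 0"
  using cartan unfolding cartan_decomposition_def by blast+

lemma br_P_K: "p \<in> P \<Longrightarrow> k \<in> K \<Longrightarrow> br p k \<in> P"
  using br_K_P[of k p] br_antisym[of p k] subspace_P by (simp add: subspace_neg)

lemma K_plus_P_unique:
  assumes "k \<in> K" "p \<in> P" "k' \<in> K" "p' \<in> P" "k + p = k' + p'"
  shows "k = k'" "p = p'"
proof -
  have diff: "k - k' = p' - p" using assms(5) by (simp add: algebra_simps)
  have "k - k' \<in> K" "p' - p \<in> P"
    using assms(1-4) subspace_K subspace_P by (simp_all add: subspace_diff)
  then have "k - k' \<in> K \<inter> P" by (simp add: diff)
  then show "k = k'" using K_inter_P by simp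
  then show "p = p'" using diff by simp
qed

definition cartan_involution :: "'g \<Rightarrow> 'g" (\<open>\<theta>\<close>) where
  "\<theta> X = (THE Y. \<exists>k\<in>K. \<exists>p\<in>P. X = k + p \<and> Y = k - p)"

lemma cartan_involution_eq: "k \<in> K \<Longrightarrow> p \<in> P \<Longrightarrow> \<theta> (k + p) = k - p"
  unfolding cartan_involution_def
  by (rule the_equality) (use K_plus_P_unique in blast)+

lemma cartan_involution_K: "k \<in> K \<Longrightarrow> \<theta> k = k"
  using cartan_involution_eq[of k 0] subspace_P by (simp add: subspace_0)

lemma cartan_involution_P: "p \<in> P \<Longrightarrow> \<theta> p = - p"
  using cartan_involution_eq[of 0 p] subspace_K by (simp add: subspace_0)

lemma linear_cartan_involution: "linear \<theta>"
proof (rule linearI)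
  fix X Y :: 'g and c :: real
  obtain k p k' p' where kp: "k \<in> K" "p \<in> P" "k' \<in> K" "p' \<in> P"
    and X: "X = k + p" and Y: "Y = k' + p'"
    using K_plus_P by meson
  have sum: "X + Y = (k + k') + (p + p')" and scale: "c *\<^sub>R X = c *\<^sub>R k + c *\<^sub>R p"
    unfolding X Y by (simp_all add: algebra_simps)
  have "k + k' \<in> K" "p + p' \<in> P" "c *\<^sub>R k \<in> K" "c *\<^sub>R p \<in> P"
    using kp subspace_K subspace_P by (simp_all add: subspace_add subspace_scale)
  then have "\<theta> (X + Y) = (k + k') - (p + p')" "\<theta> (c *\<^sub>R X) = c *\<^sub>R k - c *\<^sub>R p"
    unfolding sum scale by (simp_all only: cartan_involution_eq)
  moreover have "\<theta> X = k - p" "\<theta> Y = k' - p'"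
    unfolding X Y using kp by (simp_all only: cartan_involution_eq)
  ultimately show "\<theta> (X + Y) = \<theta> X + \<theta> Y" "\<theta> (c *\<^sub>R X) = c *\<^sub>R \<theta> X"
    by (simp_all only:) (simp_all add: algebra_simps)
qed

lemmas cartan_involution_linear_simps [simp] =
  linear_add[OF linear_cartan_involution] linear_scale[OF linear_cartan_involution]
  linear_neg[OF linear_cartan_involution] linear_0[OF linear_cartan_involution]
  linear_diff[OF linear_cartan_involution]

lemma cartan_involution_involutive [simp]: "\<theta> (\<theta> X) = X"
proof -
  obtain k p where "k \<in> K" "p \<in> P" "X = k + p" using K_plus_P by blast
  then show ?thesis by (simp add: cartan_involution_K cartan_involution_P)
qed

lemma cartan_involution_br: "\<theta> (br X Y) = br (\<theta> X) (\<theta> Y)"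
proof -
  obtain k p k' p' where kp: "k \<in> K" "p \<in> P" "X = k + p" "k' \<in> K" "p' \<in> P" "Y = k' + p'"
    using K_plus_P by meson
  have "br k k' + br p p' \<in> K" "br k p' + br p k' \<in> P"
    using kp br_K_K br_P_P br_K_P br_P_K subspace_K subspace_P by (simp_all add: subspace_add)
  then have "\<theta> ((br k k' + br p p') + (br k p' + br p k')) = (br k k' + br p p') - (br k p' + br p k')"
    by (rule cartan_involution_eq)
  moreover have "br X Y = (br k k' + br p p') + (br k p' + br p k')"
    using kp by (simp add: algebra_simps)
  moreover have "br (\<theta> X) (\<theta> Y) = (br k k' + br p p') - (br k p' + br p k')"
    using kp by (simp add: cartan_involution_K cartan_involution_P algebra_simps)
  ultimately show ?thesis by simp
qed

lemma cartan_involution_eq_neg_imp_P: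
  assumes "\<theta> X = - X"
  shows "X \<in> P"
proof -
  obtain k p where kp: "k \<in> K" "p \<in> P" "X = k + p" using K_plus_P by blast
  then have "k - p = - k - p" using assms by (simp add: cartan_involution_K cartan_involution_P)
  then have "(2::real) *\<^sub>R k = 0" by (simp add: scaleR_2 eq_neg_iff_add_eq_0)
  then have "k = 0" by simp
  then show ?thesis using kp by simp
qed

definition btheta :: "'g \<Rightarrow> 'g \<Rightarrow> real" where
  "btheta X Y = - killing br X (\<theta> Y)"

lemma bilinear_btheta: "bilinear btheta"
  unfolding bilinear_def btheta_def
  by (auto intro!: linearI simp: algebra_simps)

lemmas btheta_bilinear_simps [simp] =
  bilinear_ladd[OF bilinear_btheta] bilinear_radd[OF bilinear_btheta]
  bilinear_lmul[OF bilinear_btheta] bilinear_rmul[OF bilinear_btheta]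
  bilinear_lneg[OF bilinear_btheta] bilinear_rneg[OF bilinear_btheta]
  bilinear_lzero[OF bilinear_btheta] bilinear_rzero[OF bilinear_btheta]

lemma btheta_pos:
  assumes "X \<noteq> 0"
  shows "btheta X X > 0"
proof -
  obtain k p where kp: "k \<in> K" "p \<in> P" "X = k + p" using K_plus_P by meson
  have "btheta X X = - killing br k k + killing br p p"
    unfolding kp(3) btheta_def cartan_involution_eq[OF kp(1,2)]
    by (simp add: killing_sym[of p k])
  moreover have "k \<noteq> 0 \<or> p \<noteq> 0" using assms kp by auto
  moreover have "killing br k k \<le> 0" "killing br p p \<ge> 0"
    using killing_K_neg[OF kp(1)] killing_P_pos[OF kp(2)] by fastforce+
  ultimately show ?thesis
    using killing_K_neg[OF kp(1)] killing_P_pos[OF kp(2)] by fastforce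
qed

lemma btheta_self_nonneg: "btheta X X \<ge> 0"
  using btheta_pos[of X] by (cases "X = 0") auto

lemma btheta_br_adjoint: "btheta (br W X) Y = - btheta X (br (\<theta> W) Y)"
proof -
  have "btheta (br W X) Y = killing br (br X W) (\<theta> Y)"
    using br_antisym[of W X] by (simp add: btheta_def)
  also have "\<dots> = killing br X (br W (\<theta> Y))" by (rule killing_invariant)
  finally show ?thesis by (simp add: btheta_def cartan_involution_br)
qed

lemma root_space_cartan_involution:
  assumes "A \<subseteq> P" "X \<in> root_space br A \<mu>"
  shows "\<theta> X \<in> root_space br A (\<lambda>H. - \<mu> H)"
  unfolding root_space_def
proof (intro CollectI ballI)
  fix H assume "H \<in> A"
  then have "\<theta> H = - H" "br H X = \<mu> H *\<^sub>R X"
    using assms by (auto simp: cartan_involution_P root_space_def)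
  then have "br H (\<theta> X) = \<theta> (br (- H) X)"
    by (metis cartan_involution_br cartan_involution_involutive)
  then show "br H (\<theta> X) = - \<mu> H *\<^sub>R \<theta> X" by (simp add: \<open>br H X = _\<close>)
qed

end

locale restricted_root_decomposition = cartan_decomposed br K P
  for br :: "'g::euclidean_space \<Rightarrow> 'g \<Rightarrow> 'g" and K P +
  fixes A :: "'g set"
  assumes maximal_abelian: "maximal_abelian br P A"
begin

lemma A_subset_P: "A \<subseteq> P"
  using maximal_abelian by (simp add: maximal_abelian_def)

lemma br_cartan_involution_in_A:
  assumes X: "X \<in> root_space br A \<mu>"
  shows "br X (\<theta> X) \<in> A"
proof -
  have "\<theta> (br X (\<theta> X)) = - br X (\<theta> X)"
    by (simp add: cartan_involution_br br_antisym[of "\<theta> X"])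
  then have "br X (\<theta> X) \<in> P" by (rule cartan_involution_eq_neg_imp_P)
  moreover have "br H (br X (\<theta> X)) = 0" if "H \<in> A" for H
  proof -
    have "br H (\<theta> X) = - \<mu> H *\<^sub>R \<theta> X"
      using root_space_cartan_involution[OF A_subset_P X] that by (simp add: root_space_def)
    then show ?thesis
      using X that by (simp add: br_derivation root_space_def)
  qed
  ultimately show ?thesis
    using maximal_abelian unfolding maximal_abelian_def by blast
qed

lemma killing_br_cartan_involution:
  assumes X: "X \<in> root_space br A \<mu>" and H: "H \<in> A"
  shows "killing br (br X (\<theta> X)) H = - \<mu> H * btheta X X"
proof -
  have "br H (\<theta> X) = - \<mu> H *\<^sub>R \<theta> X"
    using root_space_cartan_involution[OF A_subset_P X] H by (simp add: root_space_def)
  then have "br (\<theta> X) H = \<mu> H *\<^sub>R \<theta> X"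
    using br_antisym[of "\<theta> X" H] by simp
  then show ?thesis
    by (simp add: killing_invariant btheta_def)
qed

lemma br_cartan_involution_nonzero:
  assumes "X \<in> root_space br A \<mu>" "X \<noteq> 0" "H \<in> A" "\<mu> H \<noteq> 0"
  shows "br X (\<theta> X) \<noteq> 0"
  using killing_br_cartan_involution[OF assms(1,3)] btheta_pos[OF assms(2)] assms(4) by auto

lemma root_at_br_cartan_involution:
  assumes X: "X \<in> root_space br A \<mu>"
  shows "\<mu> (br X (\<theta> X)) * btheta X X = - btheta (br X (\<theta> X)) (br X (\<theta> X))"
proof -
  define H where "H = br X (\<theta> X)"
  have "\<mu> H * btheta X X = btheta (br H X) X"
    using br_cartan_involution_in_A[OF X] X by (simp add: H_def root_space_def)
  also have "\<dots> = - btheta (br X H) X" by (simp add: br_antisym[of H])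
  also have "\<dots> = btheta H (br (\<theta> X) X)" by (simp add: btheta_br_adjoint)
  also have "\<dots> = - btheta H H" by (simp add: H_def br_antisym[of "\<theta> X"])
  finally show ?thesis by (simp add: H_def)
qed

lemma root_at_br_cartan_involution_neg:
  assumes "restricted_root br A \<mu>" "X \<in> root_space br A \<mu>" "X \<noteq> 0"
  shows "\<mu> (br X (\<theta> X)) < 0"
proof -
  obtain H where "H \<in> A" "\<mu> H \<noteq> 0"
    using assms(1) unfolding restricted_root_def by blast
  then have "btheta (br X (\<theta> X)) (br X (\<theta> X)) > 0"
    using br_cartan_involution_nonzero assms(2,3) btheta_pos by blast
  then have "\<mu> (br X (\<theta> X)) * btheta X X < 0"
    using root_at_br_cartan_involution[OF assms(2)] by simp
  with btheta_pos[OF assms(3)] show ?thesis by (simp add: mult_less_0_iff)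
qed

lemma root_at_br_cartan_involution_nonpos:
  assumes X: "X \<in> root_space br A \<mu>" and Y: "Y \<in> root_space br A \<nu>" "Y \<noteq> 0"
    and XY: "br X Y = 0"
  shows "\<nu> (br X (\<theta> X)) \<le> 0"
proof -
  define H where "H = br X (\<theta> X)"
  have "\<nu> H * btheta Y Y = btheta (br H Y) Y"
    using br_cartan_involution_in_A[OF X] Y by (simp add: H_def root_space_def)
  also have "br H Y = br X (br (\<theta> X) Y)"
    using XY by (simp add: H_def br_br_left)
  also have "btheta (br X (br (\<theta> X) Y)) Y = - btheta (br (\<theta> X) Y) (br (\<theta> X) Y)"
    by (rule btheta_br_adjoint)
  finally have "\<nu> H * btheta Y Y \<le> 0" using btheta_self_nonneg by simp
  with btheta_pos[OF Y(2)] show ?thesis by (simp add: H_def mult_le_0_iff)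
qed

lemma root_at_br_cartan_involution_nonneg:
  assumes X: "X \<in> root_space br A \<mu>" and Z: "Z \<in> root_space br A \<rho>" "Z \<noteq> 0"
    and XZ: "br (\<theta> X) Z = 0"
  shows "\<rho> (br X (\<theta> X)) \<ge> 0"
proof -
  define H where "H = br X (\<theta> X)"
  have "\<rho> H * btheta Z Z = btheta (br H Z) Z"
    using br_cartan_involution_in_A[OF X] Z by (simp add: H_def root_space_def)
  also have "br H Z = - br (\<theta> X) (br X Z)"
    using XZ by (simp add: H_def br_br_left)
  also have "btheta (- br (\<theta> X) (br X Z)) Z = btheta (br X Z) (br X Z)"
    by (simp add: btheta_br_adjoint)
  finally have "\<rho> H * btheta Z Z \<ge> 0" using btheta_self_nonneg by simp
  with btheta_pos[OF Z(2)] show ?thesis by (simp add: H_def zero_le_mult_iff)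
qed

lemma br_cartan_involution_root_space_vanishes:
  assumes X: "X \<in> root_space br A \<mu>" and XY: "\<forall>Y\<in>root_space br A \<nu>. br X Y = 0"
    and Z: "Z \<in> root_space br A (\<lambda>H. \<mu> H + \<nu> H)"
  shows "br (\<theta> X) Z = 0"
proof -
  define V where "V = br (\<theta> X) Z"
  have "V \<in> root_space br A (\<lambda>H. - \<mu> H + (\<mu> H + \<nu> H))"
    unfolding V_def using root_space_cartan_involution[OF A_subset_P X] Z by (rule root_space_br)
  then have "br X V = 0" using XY by simp
  then have "btheta V V = 0"
    unfolding V_def by (simp add: btheta_br_adjoint)
  then show ?thesis
    using btheta_pos V_def by force
qed

lemma ex_br_root_space_nonzero:
  assumes \<mu>: "restricted_root br A \<mu>" and \<nu>: "restricted_root br A \<nu>"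
    and \<mu>\<nu>: "restricted_root br A (\<lambda>H. \<mu> H + \<nu> H)"
    and X: "X \<in> root_space br A \<mu>" "X \<noteq> 0"
  shows "\<exists>Y\<in>root_space br A \<nu>. br X Y \<noteq> 0"
proof (rule ccontr)
  assume "\<not> ?thesis"
  then have XY: "\<forall>Y\<in>root_space br A \<nu>. br X Y = 0" by blast
  obtain Y where Y: "Y \<in> root_space br A \<nu>" "Y \<noteq> 0"
    using \<nu> unfolding restricted_root_def by blast
  obtain Z where Z: "Z \<in> root_space br A (\<lambda>H. \<mu> H + \<nu> H)" "Z \<noteq> 0"
    using \<mu>\<nu> unfolding restricted_root_def by blast
  define H where "H = br X (\<theta> X)"
  have "\<mu> H < 0"
    unfolding H_def using \<mu> X by (rule root_at_br_cartan_involution_neg)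
  moreover have "\<nu> H \<le> 0"
    unfolding H_def using X(1) Y XY by (blast intro: root_at_br_cartan_involution_nonpos)
  moreover have "\<mu> H + \<nu> H \<ge> 0"
    using root_at_br_cartan_involution_nonneg[OF X(1) Z br_cartan_involution_root_space_vanishes[OF X(1) XY Z(1)]]
    by (simp add: H_def)
  ultimately show False by simp
qed

end

theorem lemma4p2:
  fixes br :: "'g::euclidean_space \<Rightarrow> 'g \<Rightarrow> 'g"
    and K P A :: "'g set" and \<mu> \<nu> :: "'g \<Rightarrow> real"
  assumes "noncompact_type br K P"
    and "maximal_abelian br P A"
    and "restricted_root br A \<mu>"
    and "restricted_root br A \<nu>"
    and "restricted_root br A (\<lambda>H. \<mu> H + \<nu> H)"
  shows "(\<forall>X\<in>root_space br A \<mu>. X \<noteq> 0 \<longrightarrow> (\<exists>Y\<in>root_space br A \<nu>. br X Y \<noteq> 0)) \<and>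
         (\<forall>Y\<in>root_space br A \<nu>. Y \<noteq> 0 \<longrightarrow> (\<exists>X\<in>root_space br A \<mu>. br X Y \<noteq> 0))"
proof -
  interpret restricted_root_decomposition br K P A
    using assms(1,2) by unfold_locales (simp_all add: noncompact_type_def semisimple_def)
  have "(\<lambda>H. \<nu> H + \<mu> H) = (\<lambda>H. \<mu> H + \<nu> H)" by (simp add: add.commute)
  then have \<nu>\<mu>: "restricted_root br A (\<lambda>H. \<nu> H + \<mu> H)" using assms(5) by simp
  show ?thesis
  proof (intro conjI ballI impI)
    fix X assume "X \<in> root_space br A \<mu>" "X \<noteq> 0"
    then show "\<exists>Y\<in>root_space br A \<nu>. br X Y \<noteq> 0"
      using ex_br_root_space_nonzero assms(3-5) by blast
  next
    fix Y assume "Y \<in> root_space br A \<nu>" "Y \<noteq> 0"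
    then obtain X where X: "X \<in> root_space br A \<mu>" and "br Y X \<noteq> 0"
      using ex_br_root_space_nonzero[OF assms(4,3) \<nu>\<mu>] by blast
    then have "br X Y \<noteq> 0" using br_antisym[of X Y] by simp
    with X show "\<exists>X\<in>root_space br A \<mu>. br X Y \<noteq> 0" by blast
  qed
qed

end
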